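(* Let $N\ge2$ and $T,\mu>0$. Let $x(t)=(x_1(t),\dots,x_N(t))$, $x_i(t)\in\mathbb{R}$, be a (Carathéodory) solution of $$\dot x_i(t)=\frac1N\sum_{j=1}^N M_{ij}(t)(x_j-x_i),\qquad i=1,\dots,N,$$ with Lebesgue measurable $M_{ij}:[0,+\infty)\to[0,1]$, and let $\alpha:=\min_{j}x_j(0)$. Let $k\ge1$ and assume that the $(T,\mu)$-connectivity graph $G(t)$ contains the directed path $i_0\to i_1\to\dots\to i_k$ for all times $t=0,T,\dots,(k-1)T$. Then for all $t\ge kT$ and all $l\in\{0,\dots,k\}$, $$x_{i_l}(t)\ge\alpha+\eta^k\exp\!\left(-2\tfrac{N-1}{N}t\right)(x_{i_k}(0)-\alpha),\qquad \eta:=\frac{\mu T}{N+\mu T}.$$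
   Context: Given $T,\mu>0$, the $(T,\mu)$-connectivity graph at time $t\ge0$ is the directed graph $G(t)$ on nodes $\{1,\dots,N\}$ in which the arrow $i\to j$ exists iff $\frac1T\int_t^{t+T}M_{ij}(s)\,ds\ge\mu$. *)

theory Defs
  imports "HOL-Analysis.Analysis"
begin

definition conn_arrow :: "real \<Rightarrow> real \<Rightarrow> (nat \<Rightarrow> nat \<Rightarrow> real \<Rightarrow> real) \<Rightarrow> real \<Rightarrow> nat \<Rightarrow> nat \<Rightarrow> bool"
  where "conn_arrow T \<mu> M t i j \<longleftrightarrow> (1 / T) * integral {t..t+T} (M i j) \<ge> \<mu>"

definition carath_solution :: "nat \<Rightarrow> (nat \<Rightarrow> nat \<Rightarrow> real \<Rightarrow> real) \<Rightarrow> (nat \<Rightarrow> real \<Rightarrow> real) \<Rightarrow> bool"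
  where "carath_solution N M x \<longleftrightarrow>
    (\<forall>i\<in>{1..N}. \<forall>t\<ge>0.
      ((\<lambda>s. (1 / real N) * (\<Sum>j=1..N. M i j s * (x j s - x i s))) has_integral (x i t - x i 0)) {0..t})"

end

theory Submission
  imports Defs
begin

text \<open>The minimum of the opinions never decreases, so every x_i stays above \<alpha> = min_j x_j(0).
  The right-hand side of agent i is at least -c (x_i - \<alpha>), where c = (N-1)/N, plus
  M_ij (x_j - \<alpha>) / N for any j \<noteq> i. Hence z_i(t) = exp(c t) (x_i(t) - \<alpha>) is nondecreasing, and an
  arrow i -> j of the connectivity graph at time m T gives z_i((m+1) T) \<ge> (\<mu> T / N) exp(-c T) z_j(m T).
  Following the path backwards from i_k, one arrow per time window, yields
  z_(i_l)(t) \<ge> ((\<mu> T / N) exp(-c T))^(k-l) z_(i_k)(0) for t \<ge> (k-l) T, which implies the bound.\<close>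

lemma le_if_lower_right_Dini_nonneg:
  fixes F :: "real \<Rightarrow> real"
  assumes ab: "a \<le> b" and cont: "continuous_on {a..b} F"
    and slope: "\<And>s e. a \<le> s \<Longrightarrow> s < b \<Longrightarrow> e > 0 \<Longrightarrow>
      eventually (\<lambda>t. t \<le> b \<longrightarrow> F s - e * (t - s) \<le> F t) (at_right s)"
  shows "F a \<le> F b"
proof -
  have almost: "F a - e * (b - a) \<le> F b" if e: "e > 0" for e
  proof -
    define S where "S = {t \<in> {a..b}. F a - e * (t - a) \<le> F t}"
    have "closed S" unfolding S_def
      by (intro continuous_on_closed_Collect_le cont) (auto intro!: continuous_intros)
    moreover have "a \<in> S" and bdd: "bdd_above S" using ab by (auto simp: S_def bdd_above_def)
    ultimately have sup: "Sup S \<in> S" using closed_contains_Sup by blast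
    have "Sup S = b"
    proof (rule ccontr)
      assume "Sup S \<noteq> b"
      with sup have lt: "Sup S < b" and ge: "a \<le> Sup S" by (auto simp: S_def)
      from slope[OF ge lt e] obtain d where "d > Sup S"
        and near: "\<And>t. Sup S < t \<Longrightarrow> t < d \<Longrightarrow> t \<le> b \<longrightarrow> F (Sup S) - e * (t - Sup S) \<le> F t"
        unfolding eventually_at_right_field by blast
      define t where "t = min b ((Sup S + d) / 2)"
      have t: "Sup S < t" "t < d" "t \<le> b" using \<open>d > Sup S\<close> lt by (auto simp: t_def min_def)
      with near sup ge have "t \<in> S" by (force simp: S_def algebra_simps)
      then have "t \<le> Sup S" using bdd by (simp add: cSup_upper)
      with t show False by simp
    qed
    with sup show ?thesis by (simp add: S_def)
  qed
  show ?thesis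
  proof (rule field_le_epsilon)
    fix e :: real assume "e > 0"
    then have "F a - e / (b - a + 1) * (b - a) \<le> F b" using ab by (intro almost) auto
    moreover have "e / (b - a + 1) * (b - a) \<le> e" using ab \<open>e > 0\<close> by (simp add: field_simps)
    ultimately show "F a \<le> F b + e" by linarith
  qed
qed

lemma has_integral_increment:
  fixes g q :: "real \<Rightarrow> real"
  assumes base: "\<And>t. a \<le> t \<Longrightarrow> (q has_integral (g t - g a)) {a..t}"
    and "a \<le> s" "s \<le> t"
  shows "(q has_integral (g t - g s)) {s..t}"
proof -
  have qt: "q integrable_on {a..t}" using base[of t] assms(2,3) by (auto intro: has_integral_integrable)
  then have "q integrable_on {s..t}" by (rule integrable_subinterval_real) (use assms(2) in auto)
  then have "(q has_integral (integral {a..t} q - integral {a..s} q)) {s..t}"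
    using Henstock_Kurzweil_Integration.integral_combine[OF assms(2,3) qt]
    by (metis add_diff_cancel_left' has_integral_integral)
  moreover have "integral {a..t} q - integral {a..s} q = g t - g s"
    using base[of t] base[of s] assms(2,3) by (simp add: integral_unique)
  ultimately show ?thesis by simp
qed

lemma continuous_on_if_has_integral_increments:
  fixes g q :: "real \<Rightarrow> real"
  assumes "\<And>t. a \<le> t \<Longrightarrow> t \<le> b \<Longrightarrow> (q has_integral (g t - g a)) {a..t}"
  shows "continuous_on {a..b} g"
proof (cases "a \<le> b")
  case True
  then have "continuous_on {a..b} (\<lambda>t. g a + integral {a..t} q)"
    using assms by (intro continuous_intros indefinite_integral_continuous_1) blast
  moreover have "g a + integral {a..t} q = g t" if "t \<in> {a..b}" for t
    using assms[of t] that by (simp add: integral_unique)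
  ultimately show ?thesis using continuous_on_eq by blast
qed simp

lemma eventually_at_right_close_on_interval:
  fixes g :: "real \<Rightarrow> real"
  assumes "continuous_on {a..b} g" "a \<le> s" "s < b" "\<epsilon> > 0"
  shows "eventually (\<lambda>t. \<forall>r\<in>{s..t}. \<bar>g r - g s\<bar> < \<epsilon>) (at_right s)"
proof -
  obtain d where "d > 0" and d: "\<And>r. r \<in> {a..b} \<Longrightarrow> \<bar>r - s\<bar> < d \<Longrightarrow> \<bar>g r - g s\<bar> < \<epsilon>"
    using assms unfolding continuous_on_iff dist_real_def by (metis atLeastAtMost_iff less_imp_le)
  show ?thesis unfolding eventually_at_right_field
    by (rule exI[of _ "min b (s + d)"]) (use \<open>d > 0\<close> assms d in auto)
qed

lemma continuous_on_Min:
  fixes f :: "'i \<Rightarrow> 'a::topological_space \<Rightarrow> real"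
  assumes "finite I" "I \<noteq> {}" "\<And>i. i \<in> I \<Longrightarrow> continuous_on S (f i)"
  shows "continuous_on S (\<lambda>t. Min ((\<lambda>i. f i t) ` I))"
  using assms
proof (induction I rule: finite_ne_induct)
  case (insert i I)
  then have "continuous_on S (\<lambda>t. min (f i t) (Min ((\<lambda>j. f j t) ` I)))"
    by (intro continuous_on_min) auto
  with insert show ?case by simp
qed simp

lemma exp_weighted_increment_ge:
  fixes g q w :: "real \<Rightarrow> real"
  assumes "a \<le> s" "s \<le> t" and c: "0 \<le> c" and gs: "0 \<le> g s"
    and E: "exp (c * t) \<le> E" and exp_close: "exp (c * t) - exp (c * s) \<le> \<epsilon>"
    and incr: "(q has_integral (g t - g s)) {s..t}"
    and w: "(w has_integral I) {s..t}" and w_nonneg: "\<And>r. s \<le> r \<Longrightarrow> r \<le> t \<Longrightarrow> 0 \<le> w r"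
    and near: "\<And>r. s \<le> r \<Longrightarrow> r \<le> t \<Longrightarrow> g r \<le> g s + \<epsilon>"
    and q_ge: "\<And>r. s \<le> r \<Longrightarrow> r \<le> t \<Longrightarrow> - c * g r + w r \<le> q r"
  shows "exp (c * s) * g s + exp (c * a) * I - c * (t - s) * ((g s + E) * \<epsilon>) \<le> exp (c * t) * g t"
proof -
  have "((\<lambda>r. - c * (g s + \<epsilon>) + w r) has_integral (- c * (g s + \<epsilon>) * (t - s) + I)) {s..t}"
    using has_integral_add[OF has_integral_const_real[of "- c * (g s + \<epsilon>)" s t] w] \<open>s \<le> t\<close>
    by (simp add: algebra_simps)
  then have "- c * (g s + \<epsilon>) * (t - s) + I \<le> g t - g s"
  proof (rule has_integral_le[OF _ incr])
    fix r assume "r \<in> {s..t}"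
    then have "- c * (g s + \<epsilon>) \<le> - c * g r" using near c by (simp add: mult_left_mono)
    then show "- c * (g s + \<epsilon>) + w r \<le> q r" using q_ge \<open>r \<in> {s..t}\<close> by force
  qed
  then have gain: "exp (c * t) * (- c * (g s + \<epsilon>) * (t - s) + I) \<le> exp (c * t) * (g t - g s)"
    by (rule mult_left_mono) simp
  have "exp (c * t) = exp (c * s) * exp (c * (t - s))"
    by (simp add: algebra_simps flip: exp_add)
  then have "exp (c * s) * (1 + c * (t - s)) \<le> exp (c * t)"
    by (simp add: exp_ge_add_one_self)
  then have "c * (t - s) * exp (c * s) \<le> exp (c * t) - exp (c * s)"
    by (simp add: algebra_simps)
  then have growth: "c * (t - s) * exp (c * s) * g s \<le> (exp (c * t) - exp (c * s)) * g s"
    using gs by (rule mult_right_mono)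
  have "exp (c * a) \<le> exp (c * t)"
    using c \<open>a \<le> s\<close> \<open>s \<le> t\<close> by (simp add: mult_left_mono)
  moreover have "0 \<le> I" by (rule has_integral_nonneg[OF w]) (use w_nonneg in auto)
  ultimately have weight: "exp (c * a) * I \<le> exp (c * t) * I"
    by (rule mult_right_mono)
  have "0 \<le> \<epsilon>" using near[of s] \<open>s \<le> t\<close> by simp
  have "(exp (c * t) - exp (c * s)) * g s \<le> \<epsilon> * g s"
    using exp_close gs by (rule mult_right_mono)
  moreover have "exp (c * t) * \<epsilon> \<le> E * \<epsilon>"
    using E \<open>0 \<le> \<epsilon>\<close> by (rule mult_right_mono)
  ultimately have "(exp (c * t) - exp (c * s)) * g s + exp (c * t) * \<epsilon> \<le> (g s + E) * \<epsilon>"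
    by (simp add: algebra_simps)
  then have loss: "c * (t - s) * ((exp (c * t) - exp (c * s)) * g s + exp (c * t) * \<epsilon>)
      \<le> c * (t - s) * ((g s + E) * \<epsilon>)"
    using c \<open>s \<le> t\<close> by (intro mult_left_mono) auto
  have "exp (c * t) * (- c * (g s + \<epsilon>) * (t - s) + I) + c * (t - s) * exp (c * s) * g s - exp (c * t) * I
      = - (c * (t - s) * ((exp (c * t) - exp (c * s)) * g s + exp (c * t) * \<epsilon>))"
    by (simp add: algebra_simps)
  moreover have "exp (c * t) * g t = exp (c * s) * g s + exp (c * t) * (g t - g s) + (exp (c * t) - exp (c * s)) * g s"
    by (simp add: algebra_simps)
  ultimately show ?thesis using gain growth weight loss by linarith
qed

text \<open>Since \<open>g\<close> is only known through its integral increments, the product rule for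
  \<open>exp (c t) g t\<close> is replaced by a lower right Dini-derivative estimate.\<close>
lemma exp_weighted_comparison:
  fixes g q w :: "real \<Rightarrow> real"
  assumes ab: "a \<le> b" and c: "c \<ge> 0"
    and incr: "\<And>s t. a \<le> s \<Longrightarrow> s \<le> t \<Longrightarrow> t \<le> b \<Longrightarrow> (q has_integral (g t - g s)) {s..t}"
    and g_nonneg: "\<And>r. a \<le> r \<Longrightarrow> r \<le> b \<Longrightarrow> 0 \<le> g r"
    and w: "w integrable_on {a..b}" and w_nonneg: "\<And>r. a \<le> r \<Longrightarrow> r \<le> b \<Longrightarrow> 0 \<le> w r"
    and q_ge: "\<And>r. a \<le> r \<Longrightarrow> r \<le> b \<Longrightarrow> - c * g r + w r \<le> q r"
  shows "exp (c * a) * g a + exp (c * a) * integral {a..b} w \<le> exp (c * b) * g b"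
proof -
  define F where "F t = exp (c * t) * g t - exp (c * a) * integral {a..t} w" for t
  have g_cont: "continuous_on {a..b} g"
    using incr by (intro continuous_on_if_has_integral_increments) auto
  have "F a \<le> F b"
  proof (rule le_if_lower_right_Dini_nonneg[OF ab])
    show "continuous_on {a..b} F" unfolding F_def
      by (intro continuous_intros g_cont indefinite_integral_continuous_1 w)
  next
    fix s e :: real assume s: "a \<le> s" "s < b" and "e > 0"
    define K where "K = c * (g s + exp (c * b))"
    have "K \<ge> 0" using c g_nonneg s by (simp add: K_def)
    define \<epsilon> where "\<epsilon> = e / (K + 1)"
    have "\<epsilon> > 0" using \<open>e > 0\<close> \<open>K \<ge> 0\<close> by (simp add: \<epsilon>_def)
    have K\<epsilon>: "K * \<epsilon> \<le> e" using \<open>e > 0\<close> \<open>K \<ge> 0\<close> by (simp add: \<epsilon>_def field_simps)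
    have "((\<lambda>t. exp (c * t)) \<longlongrightarrow> exp (c * s)) (at_right s)"
      by (intro tendsto_intros)
    then have "eventually (\<lambda>t. exp (c * t) - exp (c * s) < \<epsilon>) (at_right s)"
      using \<open>\<epsilon> > 0\<close> by (auto simp: tendsto_iff dist_real_def dest!: spec[of _ \<epsilon>] elim: eventually_mono)
    moreover have "eventually (\<lambda>t. \<forall>r\<in>{s..t}. \<bar>g r - g s\<bar> < \<epsilon>) (at_right s)"
      using eventually_at_right_close_on_interval[OF g_cont s \<open>\<epsilon> > 0\<close>] .
    moreover have "eventually (\<lambda>t. s < t) (at_right s)" by (rule eventually_at_right_less)
    ultimately show "eventually (\<lambda>t. t \<le> b \<longrightarrow> F s - e * (t - s) \<le> F t) (at_right s)"
    proof eventually_elim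
      case (elim t)
      show ?case
      proof
        assume "t \<le> b"
        define I where "I = integral {s..t} w"
        have w_st: "(w has_integral I) {s..t}"
          unfolding I_def using s \<open>t \<le> b\<close>
          by (intro integrable_integral integrable_subinterval_real[OF w]) auto
        have "integral {a..t} w = integral {a..s} w + I"
          unfolding I_def using s elim \<open>t \<le> b\<close>
          by (intro Henstock_Kurzweil_Integration.integral_combine[symmetric]
              integrable_subinterval_real[OF w]) auto
        then have "exp (c * a) * integral {a..t} w = exp (c * a) * integral {a..s} w + exp (c * a) * I"
          by (simp add: distrib_left)
        moreover have "exp (c * s) * g s + exp (c * a) * I - c * (t - s) * ((g s + exp (c * b)) * \<epsilon>)
            \<le> exp (c * t) * g t"
        proof (rule exp_weighted_increment_ge[OF s(1) _ c _ _ _ incr w_st])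
          fix r assume "s \<le> r" "r \<le> t"
          then have "\<bar>g r - g s\<bar> < \<epsilon>" using elim by auto
          then show "g r \<le> g s + \<epsilon>" by linarith
        qed (use s elim \<open>t \<le> b\<close> c g_nonneg w_nonneg q_ge in \<open>auto simp: mult_left_mono\<close>)
        moreover have "c * (t - s) * ((g s + exp (c * b)) * \<epsilon>) \<le> e * (t - s)"
          using K\<epsilon> elim by (simp add: K_def mult_left_mono mult.commute mult.left_commute)
        ultimately show "F s - e * (t - s) \<le> F t" unfolding F_def by linarith
      qed
    qed
  qed
  then show ?thesis by (simp add: F_def algebra_simps)
qed

lemma minimiser_gap_le:
  fixes f :: "'i \<Rightarrow> real \<Rightarrow> real"
  assumes "finite I" "j \<in> I" and minimiser: "\<And>i. i \<in> I \<Longrightarrow> f j t \<le> f i t"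
    and close: "\<And>i. i \<in> I \<Longrightarrow> \<bar>f i r - f i s\<bar> < \<epsilon> \<and> \<bar>f i t - f i s\<bar> < \<epsilon>"
  shows "f j r - Min ((\<lambda>i. f i r) ` I) \<le> 4 * \<epsilon>"
proof -
  have "Min ((\<lambda>i. f i r) ` I) \<in> (\<lambda>i. f i r) ` I" using assms(1,2) by (intro Min_in) auto
  then obtain i where "i \<in> I" and "Min ((\<lambda>i. f i r) ` I) = f i r" by auto
  then show ?thesis
    using minimiser[of i] close[of i] close[OF assms(2)] unfolding abs_less_iff by linarith
qed

lemma Min_family_nondecreasing:
  fixes f q :: "'i \<Rightarrow> real \<Rightarrow> real"
  assumes I: "finite I" "I \<noteq> {}" and ab: "a \<le> b" and C: "C \<ge> 0"
    and incr: "\<And>i s t. i \<in> I \<Longrightarrow> a \<le> s \<Longrightarrow> s \<le> t \<Longrightarrow> t \<le> b \<Longrightarrow>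
      (q i has_integral (f i t - f i s)) {s..t}"
    and q_ge: "\<And>i r. i \<in> I \<Longrightarrow> a \<le> r \<Longrightarrow> r \<le> b \<Longrightarrow>
      - C * (f i r - Min ((\<lambda>j. f j r) ` I)) \<le> q i r"
  shows "Min ((\<lambda>i. f i a) ` I) \<le> Min ((\<lambda>i. f i b) ` I)"
proof -
  define m where "m t = Min ((\<lambda>i. f i t) ` I)" for t
  have m_le: "m t \<le> f i t" if "i \<in> I" for i t
    using I that by (simp add: m_def)
  have m_attained: "\<exists>i\<in>I. m t = f i t" for t
  proof -
    have "m t \<in> (\<lambda>i. f i t) ` I" unfolding m_def using I by (intro Min_in) auto
    then show ?thesis by auto
  qed
  have f_cont: "continuous_on {a..b} (f i)" if "i \<in> I" for i
    using incr[OF that] by (intro continuous_on_if_has_integral_increments) auto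
  have "m a \<le> m b"
  proof (rule le_if_lower_right_Dini_nonneg[OF ab])
    show "continuous_on {a..b} m"
      unfolding m_def using I f_cont by (rule continuous_on_Min)
  next
    fix s e :: real assume s: "a \<le> s" "s < b" and "e > 0"
    define \<epsilon> where "\<epsilon> = e / (4 * C + 1)"
    have "\<epsilon> > 0" using \<open>e > 0\<close> C by (simp add: \<epsilon>_def)
    have C\<epsilon>: "4 * C * \<epsilon> \<le> e" using \<open>e > 0\<close> C by (simp add: \<epsilon>_def field_simps)
    have "eventually (\<lambda>t. \<forall>i\<in>I. \<forall>r\<in>{s..t}. \<bar>f i r - f i s\<bar> < \<epsilon>) (at_right s)"
      using eventually_at_right_close_on_interval[OF f_cont s \<open>\<epsilon> > 0\<close>]
      by (simp add: eventually_ball_finite_distrib[OF I(1)])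
    moreover have "eventually (\<lambda>t. s < t) (at_right s)" by (rule eventually_at_right_less)
    ultimately show "eventually (\<lambda>t. t \<le> b \<longrightarrow> m s - e * (t - s) \<le> m t) (at_right s)"
    proof eventually_elim
      case (elim t)
      show ?case
      proof
        assume "t \<le> b"
        obtain j where j: "j \<in> I" and mj: "m t = f j t" using m_attained by blast
        have minimiser: "f j t \<le> f i t" if "i \<in> I" for i using mj m_le[OF that, of t] by simp
        have slow: "- (4 * C * \<epsilon>) \<le> q j r" if r: "r \<in> {s..t}" for r
        proof -
          have "f j r - m r \<le> 4 * \<epsilon>"
            unfolding m_def using I(1) j
            by (rule minimiser_gap_le[where t = t and s = s]) (use minimiser elim r in auto)
          then have "C * (f j r - m r) \<le> C * (4 * \<epsilon>)" using C by (rule mult_left_mono)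
          then show ?thesis using q_ge[OF j, of r] r s \<open>t \<le> b\<close> by (simp add: m_def)
        qed
        have "(t - s) * - (4 * C * \<epsilon>) \<le> f j t - f j s"
          using has_integral_le[OF has_integral_const_real[of "- (4 * C * \<epsilon>)" s t] incr[OF j, of s t]]
            slow s elim \<open>t \<le> b\<close> by auto
        moreover have "4 * C * \<epsilon> * (t - s) \<le> e * (t - s)"
          using C\<epsilon> elim by (intro mult_right_mono) auto
        ultimately show "m s - e * (t - s) \<le> m t"
          using mj m_le[OF j, of s] by (simp add: algebra_simps)
      qed
    qed
  qed
  then show ?thesis by (simp add: m_def)
qed

lemma sum_weighted_differences_ge:
  fixes w v :: "'i \<Rightarrow> real"
  assumes I: "finite I" "i \<in> I"
    and w: "\<And>l. l \<in> I \<Longrightarrow> 0 \<le> w l \<and> w l \<le> 1" and \<alpha>: "\<And>l. l \<in> I \<Longrightarrow> \<alpha> \<le> v l"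
  shows "(\<Sum>l\<in>I - {i}. w l * (v l - \<alpha>)) - (real (card I) - 1) * (v i - \<alpha>)
    \<le> (\<Sum>l\<in>I. w l * (v l - v i))"
proof -
  have "(\<Sum>l\<in>I. w l * (v l - v i))
      = (\<Sum>l\<in>I - {i}. w l * (v l - \<alpha>)) - (\<Sum>l\<in>I - {i}. w l * (v i - \<alpha>))"
    using sum.remove[OF I, of "\<lambda>l. w l * (v l - v i)"]
    by (simp add: sum_subtractf[symmetric] algebra_simps)
  moreover have "(\<Sum>l\<in>I - {i}. w l * (v i - \<alpha>)) \<le> (\<Sum>l\<in>I - {i}. v i - \<alpha>)"
    using w \<alpha>[OF I(2)] by (intro sum_mono) (simp add: mult_left_le_one_le)
  moreover have "(\<Sum>l\<in>I - {i}. v i - \<alpha>) = (real (card I) - 1) * (v i - \<alpha>)"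
  proof -
    have "1 \<le> card I" using I by (auto simp: Suc_le_eq card_gt_0_iff)
    then show ?thesis using I by (simp add: card_Diff_singleton of_nat_diff)
  qed
  ultimately show ?thesis by linarith
qed

lemma connectivity_factor_le:
  fixes n \<mu> T c t :: real
  assumes "0 < n" "0 < \<mu>" "0 < T" "0 \<le> c" "d \<le> k" "real d * T \<le> t"
  shows "(\<mu> * T / (n + \<mu> * T)) ^ k * exp (- c * t) \<le> (\<mu> * T / n * exp (- c * T)) ^ d"
proof -
  have "0 < \<mu> * T" using assms(2,3) by simp
  then have \<eta>: "0 \<le> \<mu> * T / (n + \<mu> * T)" "\<mu> * T / (n + \<mu> * T) \<le> 1"
    using \<open>0 < n\<close> by (simp_all add: divide_le_eq)
  have "(\<mu> * T / (n + \<mu> * T)) ^ k \<le> (\<mu> * T / (n + \<mu> * T)) ^ d"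
    using \<eta> \<open>d \<le> k\<close> by (rule power_decreasing[rotated 1])
  also have "\<dots> \<le> (\<mu> * T / n) ^ d"
    using \<eta> \<open>0 < \<mu> * T\<close> \<open>0 < n\<close> by (intro power_mono divide_left_mono) (auto intro: mult_pos_pos)
  finally have "(\<mu> * T / (n + \<mu> * T)) ^ k \<le> (\<mu> * T / n) ^ d" .
  moreover have "c * (real d * T) \<le> c * t"
    using assms(6,4) by (rule mult_left_mono)
  then have "exp (- c * t) \<le> exp (- c * T) ^ d"
    by (simp add: algebra_simps flip: exp_of_nat_mult)
  ultimately have "(\<mu> * T / (n + \<mu> * T)) ^ k * exp (- c * t) \<le> (\<mu> * T / n) ^ d * exp (- c * T) ^ d"
    using \<eta> \<open>0 < \<mu> * T\<close> \<open>0 < n\<close> by (intro mult_mono) auto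
  then show ?thesis by (simp only: power_mult_distrib)
qed

locale consensus_solution =
  fixes N :: nat and M :: "nat \<Rightarrow> nat \<Rightarrow> real \<Rightarrow> real" and x :: "nat \<Rightarrow> real \<Rightarrow> real"
  assumes agents: "N \<ge> 1"
    and M_range: "\<And>i j s. i \<in> {1..N} \<Longrightarrow> j \<in> {1..N} \<Longrightarrow> 0 \<le> s \<Longrightarrow> 0 \<le> M i j s \<and> M i j s \<le> 1"
    and solution: "carath_solution N M x"
begin

definition rate :: "nat \<Rightarrow> real \<Rightarrow> real"
  where "rate i r = (1 / real N) * (\<Sum>j=1..N. M i j r * (x j r - x i r))"

definition decay :: real
  where "decay = (real N - 1) / real N"

definition min_state :: "real \<Rightarrow> real"
  where "min_state t = Min ((\<lambda>j. x j t) ` {1..N})"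

definition scaled_gap :: "nat \<Rightarrow> real \<Rightarrow> real"
  where "scaled_gap i t = exp (decay * t) * (x i t - min_state 0)"

lemma decay_nonneg: "0 \<le> decay"
  using agents by (simp add: decay_def)

lemma rate_has_integral:
  assumes "i \<in> {1..N}" "0 \<le> s" "s \<le> t"
  shows "(rate i has_integral (x i t - x i s)) {s..t}"
proof (rule has_integral_increment[where g = "x i" and q = "rate i" and a = 0])
  show "(rate i has_integral (x i t' - x i 0)) {0..t'}" if "0 \<le> t'" for t'
    using solution assms(1) that unfolding carath_solution_def rate_def by blast
qed (use assms in auto)

lemma min_state_le: "i \<in> {1..N} \<Longrightarrow> min_state t \<le> x i t"
  by (simp add: min_state_def)

lemma rate_ge:
  assumes i: "i \<in> {1..N}" and "0 \<le> r" and \<alpha>: "\<And>l. l \<in> {1..N} \<Longrightarrow> \<alpha> \<le> x l r"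
  shows "- decay * (x i r - \<alpha>) + (\<Sum>l\<in>{1..N} - {i}. M i l r * (x l r - \<alpha>)) / real N \<le> rate i r"
proof -
  have "(\<Sum>l\<in>{1..N} - {i}. M i l r * (x l r - \<alpha>)) - (real (card {1..N}) - 1) * (x i r - \<alpha>)
      \<le> (\<Sum>l\<in>{1..N}. M i l r * (x l r - x i r))"
    by (rule sum_weighted_differences_ge) (use i M_range \<alpha> \<open>0 \<le> r\<close> in auto)
  then have "((\<Sum>l\<in>{1..N} - {i}. M i l r * (x l r - \<alpha>)) - (real N - 1) * (x i r - \<alpha>)) / real N
      \<le> (\<Sum>l=1..N. M i l r * (x l r - x i r)) / real N"
    by (intro divide_right_mono) simp_all
  moreover have "- decay * (x i r - \<alpha>) = - ((real N - 1) * (x i r - \<alpha>) / real N)"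
    by (simp add: decay_def)
  ultimately show ?thesis
    unfolding rate_def by (simp add: diff_divide_distrib)
qed

lemma rate_ge_gap:
  assumes "i \<in> {1..N}" "0 \<le> r" "\<And>l. l \<in> {1..N} \<Longrightarrow> \<alpha> \<le> x l r"
  shows "- decay * (x i r - \<alpha>) \<le> rate i r"
proof -
  have "- decay * (x i r - \<alpha>) + (\<Sum>l\<in>{1..N} - {i}. M i l r * (x l r - \<alpha>)) / real N \<le> rate i r"
    by (rule rate_ge) (use assms in auto)
  moreover have "0 \<le> (\<Sum>l\<in>{1..N} - {i}. M i l r * (x l r - \<alpha>)) / real N"
    using assms M_range by (intro divide_nonneg_nonneg sum_nonneg) auto
  ultimately show ?thesis by linarith
qed

lemma rate_ge_neighbour:
  assumes "i \<in> {1..N}" "j \<in> {1..N}" "i \<noteq> j" "0 \<le> r" "\<And>l. l \<in> {1..N} \<Longrightarrow> \<alpha> \<le> x l r"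
  shows "- decay * (x i r - \<alpha>) + M i j r * (x j r - \<alpha>) / real N \<le> rate i r"
proof -
  have "- decay * (x i r - \<alpha>) + (\<Sum>l\<in>{1..N} - {i}. M i l r * (x l r - \<alpha>)) / real N \<le> rate i r"
    by (rule rate_ge) (use assms in auto)
  moreover have "M i j r * (x j r - \<alpha>) \<le> (\<Sum>l\<in>{1..N} - {i}. M i l r * (x l r - \<alpha>))"
    using assms M_range by (intro member_le_sum) auto
  then have "M i j r * (x j r - \<alpha>) / real N \<le> (\<Sum>l\<in>{1..N} - {i}. M i l r * (x l r - \<alpha>)) / real N"
    by (rule divide_right_mono) simp
  ultimately show ?thesis by linarith
qed

lemma min_state_mono:
  assumes "0 \<le> s" "s \<le> t"
  shows "min_state s \<le> min_state t"
  unfolding min_state_def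
proof (rule Min_family_nondecreasing[OF _ _ \<open>s \<le> t\<close> decay_nonneg])
  fix i r assume "i \<in> {1..N}" "s \<le> r" "r \<le> t"
  then show "- decay * (x i r - Min ((\<lambda>j. x j r) ` {1..N})) \<le> rate i r"
    using assms rate_ge_gap min_state_le unfolding min_state_def by auto
qed (use agents assms rate_has_integral in auto)

lemma min_state_0_le:
  assumes "i \<in> {1..N}" "0 \<le> t"
  shows "min_state 0 \<le> x i t"
  using min_state_mono[of 0 t] min_state_le[of i t] assms by simp

lemma scaled_gap_nonneg: "i \<in> {1..N} \<Longrightarrow> 0 \<le> t \<Longrightarrow> 0 \<le> scaled_gap i t"
  using min_state_0_le by (simp add: scaled_gap_def)

lemma scaled_gap_mono:
  assumes i: "i \<in> {1..N}" and st: "0 \<le> s" "s \<le> t"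
  shows "scaled_gap i s \<le> scaled_gap i t"
proof -
  have "exp (decay * s) * (x i s - min_state 0) + exp (decay * s) * integral {s..t} (\<lambda>_. 0)
      \<le> exp (decay * t) * (x i t - min_state 0)"
  proof (rule exp_weighted_comparison[OF st(2) decay_nonneg])
    fix r assume "s \<le> r" "r \<le> t"
    then show "- decay * (x i r - min_state 0) + 0 \<le> rate i r"
      using rate_ge_gap[OF i, of r "min_state 0"] min_state_0_le st by auto
  qed (use i st rate_has_integral min_state_0_le in auto)
  then show ?thesis by (simp add: scaled_gap_def)
qed

lemma scaled_gap_transfer:
  assumes i: "i \<in> {1..N}" and j: "j \<in> {1..N}" "i \<noteq> j" and ab: "0 \<le> a" "a \<le> b"
    and M_int: "M i j integrable_on {a..b}"
  shows "scaled_gap i a + exp (- decay * (b - a)) * scaled_gap j a / real N * integral {a..b} (M i j)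
    \<le> scaled_gap i b"
proof -
  define K where "K = exp (- decay * b) * scaled_gap j a / real N"
  have "K \<ge> 0" using scaled_gap_nonneg[OF j(1) ab(1)] by (simp add: K_def)
  have "exp (decay * a) * (x i a - min_state 0) + exp (decay * a) * integral {a..b} (\<lambda>r. K * M i j r)
      \<le> exp (decay * b) * (x i b - min_state 0)"
  proof (rule exp_weighted_comparison[OF ab(2) decay_nonneg])
    show "(\<lambda>r. K * M i j r) integrable_on {a..b}" using M_int by (rule integrable_on_mult_right)
  next
    fix r assume r: "a \<le> r" "r \<le> b"
    have "K \<le> exp (- decay * r) * scaled_gap j r / real N"
    proof -
      have "exp (- decay * b) \<le> exp (- decay * r)" using r decay_nonneg by (simp add: mult_left_mono)
      moreover have "scaled_gap j a \<le> scaled_gap j r" using scaled_gap_mono[OF j(1) ab(1)] r by simp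
      ultimately show ?thesis unfolding K_def using scaled_gap_nonneg[OF j(1) ab(1)]
        by (intro divide_right_mono mult_mono) auto
    qed
    also have "exp (- decay * r) * scaled_gap j r = x j r - min_state 0"
      by (simp add: scaled_gap_def exp_minus field_simps)
    finally have "K * M i j r \<le> (x j r - min_state 0) / real N * M i j r"
      using M_range[OF i j(1), of r] r ab by (intro mult_right_mono) auto
    then have "K * M i j r \<le> M i j r * (x j r - min_state 0) / real N"
      by (simp add: ac_simps)
    then show "- decay * (x i r - min_state 0) + K * M i j r \<le> rate i r"
      using rate_ge_neighbour[OF i j, of r "min_state 0"] min_state_0_le r ab by auto
  qed (use i ab rate_has_integral min_state_0_le \<open>K \<ge> 0\<close> M_range[OF i j(1)] in auto)
  then have "scaled_gap i a + exp (decay * a) * K * integral {a..b} (M i j) \<le> scaled_gap i b"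
    by (simp add: scaled_gap_def mult.assoc)
  moreover have "exp (decay * a) * exp (- decay * b) = exp (- decay * (b - a))"
    by (simp add: algebra_simps flip: exp_add)
  then have "exp (decay * a) * K = exp (- decay * (b - a)) * scaled_gap j a / real N"
    by (simp only: K_def times_divide_eq_right mult.assoc[symmetric])
  ultimately show ?thesis by simp
qed

lemma scaled_gap_arrow_step:
  assumes "0 < T" "0 < \<mu>" and i: "i \<in> {1..N}" and j: "j \<in> {1..N}" "i \<noteq> j" and "0 \<le> a"
    and "conn_arrow T \<mu> M a i j"
  shows "\<mu> * T / real N * exp (- decay * T) * scaled_gap j a \<le> scaled_gap i (a + T)"
proof -
  have "\<mu> \<le> integral {a..a + T} (M i j) / T"
    using \<open>conn_arrow T \<mu> M a i j\<close> by (simp add: conn_arrow_def)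
  then have flow: "\<mu> * T \<le> integral {a..a + T} (M i j)"
    using \<open>0 < T\<close> by (simp add: pos_le_divide_eq)
  \<comment> \<open>This is why \<open>proposition6\<close> never uses measurability of \<open>M\<close>: a non-integrable function
    has integral \<open>0 < \<mu> T\<close>.\<close>
  have "M i j integrable_on {a..a + T}"
  proof (rule ccontr)
    assume "\<not> M i j integrable_on {a..a + T}"
    then have "integral {a..a + T} (M i j) = 0" by (rule not_integrable_integral)
    moreover have "0 < \<mu> * T" using \<open>0 < T\<close> \<open>0 < \<mu>\<close> by simp
    ultimately show False using flow by linarith
  qed
  then have "scaled_gap i a + exp (- decay * T) * scaled_gap j a / real N * integral {a..a + T} (M i j)
      \<le> scaled_gap i (a + T)"
    using scaled_gap_transfer[OF i j \<open>0 \<le> a\<close>, of "a + T"] \<open>0 < T\<close> by simp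
  moreover have "exp (- decay * T) * scaled_gap j a / real N * (\<mu> * T)
      \<le> exp (- decay * T) * scaled_gap j a / real N * integral {a..a + T} (M i j)"
    using flow scaled_gap_nonneg[OF j(1) \<open>0 \<le> a\<close>] by (intro mult_left_mono) auto
  moreover have "\<mu> * T / real N * exp (- decay * T) * scaled_gap j a
      = exp (- decay * T) * scaled_gap j a / real N * (\<mu> * T)"
    by (simp add: ac_simps)
  ultimately show ?thesis
    using scaled_gap_nonneg[OF i \<open>0 \<le> a\<close>] by linarith
qed

lemma scaled_gap_along_path:
  assumes "0 < T" "0 < \<mu>"
    and "\<And>l. l \<le> d \<Longrightarrow> q l \<in> {1..N}"
    and "\<And>l. l < d \<Longrightarrow> q (Suc l) \<noteq> q l"
    and "\<And>l. l < d \<Longrightarrow> conn_arrow T \<mu> M (real l * T) (q (Suc l)) (q l)"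
    and "real d * T \<le> t"
  shows "(\<mu> * T / real N * exp (- decay * T)) ^ d * scaled_gap (q 0) 0 \<le> scaled_gap (q d) t"
  using assms(3-)
proof (induction d arbitrary: t)
  case 0
  then show ?case using scaled_gap_mono[of "q 0" 0 t] by simp
next
  case (Suc d)
  define \<beta> where "\<beta> = \<mu> * T / real N * exp (- decay * T)"
  have "0 \<le> \<beta>" using assms(1,2) by (simp add: \<beta>_def)
  have "\<beta> ^ d * scaled_gap (q 0) 0 \<le> scaled_gap (q d) (real d * T)"
    unfolding \<beta>_def using Suc.prems by (intro Suc.IH) auto
  then have "\<beta> ^ Suc d * scaled_gap (q 0) 0 \<le> \<beta> * scaled_gap (q d) (real d * T)"
    using \<open>0 \<le> \<beta>\<close> by (simp add: mult_left_mono mult.assoc)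
  also have "\<dots> \<le> scaled_gap (q (Suc d)) (real d * T + T)"
    unfolding \<beta>_def using assms(1,2) Suc.prems by (intro scaled_gap_arrow_step) auto
  also have "\<dots> \<le> scaled_gap (q (Suc d)) t"
    using assms(1) Suc.prems by (intro scaled_gap_mono) (auto simp: algebra_simps)
  finally show ?case unfolding \<beta>_def .
qed

lemma x_ge_along_path:
  assumes "0 < T" "0 < \<mu>"
    and "\<And>l. l \<le> d \<Longrightarrow> q l \<in> {1..N}"
    and "\<And>l. l < d \<Longrightarrow> q (Suc l) \<noteq> q l"
    and "\<And>l. l < d \<Longrightarrow> conn_arrow T \<mu> M (real l * T) (q (Suc l)) (q l)"
    and "d \<le> k" "real d * T \<le> t"
  shows "min_state 0 + (\<mu> * T / (real N + \<mu> * T)) ^ k * exp (- 2 * decay * t) * (x (q 0) 0 - min_state 0)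
    \<le> x (q d) t"
proof -
  have "(\<mu> * T / (real N + \<mu> * T)) ^ k * exp (- decay * t) * scaled_gap (q 0) 0
      \<le> (\<mu> * T / real N * exp (- decay * T)) ^ d * scaled_gap (q 0) 0"
    using connectivity_factor_le[of "real N" \<mu> T decay d k t] assms agents decay_nonneg
      scaled_gap_nonneg[of "q 0" 0]
    by (intro mult_right_mono) auto
  also have "\<dots> \<le> scaled_gap (q d) t"
    using assms by (intro scaled_gap_along_path) auto
  finally have "exp (- decay * t) * ((\<mu> * T / (real N + \<mu> * T)) ^ k * exp (- decay * t) * scaled_gap (q 0) 0)
      \<le> exp (- decay * t) * scaled_gap (q d) t"
    by simp
  moreover have "exp (- decay * t) * scaled_gap (q d) t = x (q d) t - min_state 0"
    by (simp add: scaled_gap_def exp_minus)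
  moreover have "exp (- decay * t) * ((\<mu> * T / (real N + \<mu> * T)) ^ k * exp (- decay * t) * scaled_gap (q 0) 0)
      = (\<mu> * T / (real N + \<mu> * T)) ^ k * exp (- 2 * decay * t) * (x (q 0) 0 - min_state 0)"
  proof -
    have "exp (- 2 * decay * t) = exp (- decay * t) * exp (- decay * t)"
      by (simp add: algebra_simps flip: exp_add)
    then show ?thesis by (simp add: scaled_gap_def algebra_simps)
  qed
  ultimately show ?thesis by linarith
qed

end

theorem proposition6:
  fixes N :: nat and T \<mu> :: real
    and M :: "nat \<Rightarrow> nat \<Rightarrow> real \<Rightarrow> real"
    and x :: "nat \<Rightarrow> real \<Rightarrow> real"
    and k :: nat and p :: "nat \<Rightarrow> nat"
  assumes N2: "N \<ge> 2" and Tpos: "T > 0" and mupos: "\<mu> > 0"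
    and Mmeas: "\<And>i j. i \<in> {1..N} \<Longrightarrow> j \<in> {1..N} \<Longrightarrow> M i j \<in> borel_measurable (lebesgue_on {0..})"
    and Mrange: "\<And>i j s. i \<in> {1..N} \<Longrightarrow> j \<in> {1..N} \<Longrightarrow> s \<ge> 0 \<Longrightarrow> 0 \<le> M i j s \<and> M i j s \<le> 1"
    and sol: "carath_solution N M x"
    and k1: "k \<ge> 1"
    and pnodes: "\<And>l. l \<le> k \<Longrightarrow> p l \<in> {1..N}"
    and pdist: "inj_on p {0..k}"
    and parrows: "\<And>m l. m < k \<Longrightarrow> l < k \<Longrightarrow> conn_arrow T \<mu> M (real m * T) (p l) (p (Suc l))"
  shows "\<forall>t\<ge>real k * T. \<forall>l\<le>k.
           x (p l) t \<ge> Min ((\<lambda>j. x j 0) ` {1..N})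
             + (\<mu> * T / (real N + \<mu> * T)) ^ k * exp (- 2 * ((real N - 1) / real N) * t)
               * (x (p k) 0 - Min ((\<lambda>j. x j 0) ` {1..N}))"
proof (intro allI impI)
  interpret consensus_solution N M x
    using N2 Mrange sol by unfold_locales auto
  fix t l assume t: "real k * T \<le> t" and "l \<le> k"
  \<comment> \<open>the bound propagates against the arrows, from \<open>p k\<close> back to \<open>p l\<close>\<close>
  define q where "q m = p (k - m)" for m
  have "min_state 0 + (\<mu> * T / (real N + \<mu> * T)) ^ k * exp (- 2 * decay * t) * (x (q 0) 0 - min_state 0)
      \<le> x (q (k - l)) t"
  proof (rule x_ge_along_path[OF Tpos mupos])
    fix m assume "m < k - l"
    then show "q (Suc m) \<noteq> q m"
      using inj_onD[OF pdist, of "k - Suc m" "k - m"] by (auto simp: q_def)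
    show "conn_arrow T \<mu> M (real m * T) (q (Suc m)) (q m)"
      using parrows[of m "k - Suc m"] \<open>m < k - l\<close> by (simp add: q_def Suc_diff_Suc)
  next
    have "real (k - l) * T \<le> real k * T" using Tpos by (intro mult_right_mono) auto
    with t show "real (k - l) * T \<le> t" by linarith
  next
    fix m assume "m \<le> k - l"
    then show "q m \<in> {1..N}" using pnodes[of "k - m"] by (simp add: q_def)
  qed (use \<open>l \<le> k\<close> in simp)
  then show "x (p l) t \<ge> Min ((\<lambda>j. x j 0) ` {1..N})
      + (\<mu> * T / (real N + \<mu> * T)) ^ k * exp (- 2 * ((real N - 1) / real N) * t)
        * (x (p k) 0 - Min ((\<lambda>j. x j 0) ` {1..N}))"
    using \<open>l \<le> k\<close> by (simp add: q_def min_state_def decay_def)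
qed

end
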